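(* Let $N\ge1$. The maps $T_\Lambda$, $R_\sigma$, $M_\alpha$ ($\Lambda\subseteq P_N$, $\sigma\in S_N$, $\alpha\in\mathbb{C}^*$) all lie in $\mathfrak{G}_N:=\big[\mathrm{Aut}(\mathbb{D}_N)_\pi\cap\mathrm{N}(\mathfrak{M}_N)\big]\mathfrak{M}_N$. Furthermore, the set $G_N:=\mathfrak{T}_N\mathfrak{R}_N\mathfrak{M}_N$ equipped with the operation $$T_{\Lambda_1}R_{\sigma_1}M_{\alpha_1}\cdot T_{\Lambda_2}R_{\sigma_2}M_{\alpha_2}=T_{\Lambda_1\oplus\sigma_1(\Lambda_2)}R_{\sigma_1\sigma_2}M_{\alpha_1\alpha_2}$$ is a subgroup of $\mathfrak{G}_N$ isomorphic to $\big(\{\pm1\}^N\rtimes_\varphi S_N\big)\times\mathbb{C}^*$, where $\varphi_\sigma(\varepsilon_1,\dots,\varepsilon_N)=(\varepsilon_{\sigma^{-1}(1)},\dots,\varepsilon_{\sigma^{-1}(N)})$.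
   Context: $P_N=\{1,\dots,N\}$; vectors are functions on $P_N$, $v^{-1}[S]=\{\ell:v_\ell\in S\}$; $\mathrm{Tr}(v,\Lambda):=\sum_{\ell\in\Lambda}v_\ell$; $\oplus$ is symmetric difference. $\mathcal{C}:=\{z:\mathrm{Re}(z)>0\text{ or }z\in i\mathbb{R}_{>0}\}$. $\mathbb{D}_N:=\{(w,a,\theta)\in\mathbb{C}\times\mathbb{C}^N\times\mathbb{R}^N: a^{-1}[0]\subseteq\theta^{-1}[\mathbb{R}\smallsetminus\mathbb{Z}]\}$; $\pi(w,a,\theta):=w-\mathrm{Tr}(a,a^{-1}[-\mathcal{C}])$. $\mathrm{Aut}(\mathbb{D}_N)$ is the group of homeomorphisms of $\mathbb{D}_N$; $\mathrm{Aut}(\mathbb{D}_N)_\pi:=\{g:\pi\circ g=\pi\}$. $T_\Lambda(w,a,\theta):=(w-\mathrm{Tr}(a,\Lambda),a\,d(\Lambda),\theta\,d(\Lambda))$ with $d(\Lambda)$ diagonal with entry $-1$ at $\ell\in\Lambda$ and $1$ otherwise; $R_\sigma(w,a,\theta):=(w,a\,r(\sigma),\theta\,r(\sigma))$ with $r(\sigma)$ the matrix whose $\ell$-th column is the $\sigma^{-1}(\ell)$-th column of the identity; $M_\alpha(w,a,\theta):=(\alpha w,\alpha a,\theta)$. $\mathfrak{T}_N,\mathfrak{R}_N,\mathfrak{M}_N$ are the groups generated by the $T_\Lambda$, the $R_\sigma$, the $M_\alpha$ respectively; $\mathrm{N}(\mathfrak{M}_N)$ is the normalizer of $\mathfrak{M}_N$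 in $\mathrm{Aut}(\mathbb{D}_N)$. *)

theory Defs
  imports "HOL-Analysis.Analysis" "HOL-Algebra.Algebra" "HOL-Combinatorics.Permutations"
begin

type_synonym ('n) pt = "complex \<times> (complex^'n) \<times> (real^'n)"

text \<open>The index set P_N is the finite type 'n (N = CARD('n) \<ge> 1).\<close>

definition Tr :: "complex^'n \<Rightarrow> 'n set \<Rightarrow> complex" where
  "Tr v L = (\<Sum>l\<in>L. v $ l)"

definition Ccone :: "complex set" where
  "Ccone = {z. Re z > 0 \<or> (Re z = 0 \<and> Im z > 0)}"

definition DN :: "('n::finite) pt set" where
  "DN = {(w, a, \<theta>). \<forall>l. a $ l = 0 \<longrightarrow> \<theta> $ l \<notin> \<int>}"

definition piN :: "('n::finite) pt \<Rightarrow> complex" where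
  "piN = (\<lambda>(w, a, \<theta>). w - Tr a {l. a $ l \<in> uminus ` Ccone})"

definition symdiff :: "'a set \<Rightarrow> 'a set \<Rightarrow> 'a set" where
  "symdiff A B = (A - B) \<union> (B - A)"

definition Tmap :: "'n set \<Rightarrow> ('n::finite) pt \<Rightarrow> 'n pt" where
  "Tmap L = (\<lambda>(w, a, \<theta>). (w - Tr a L,
       \<chi> l. (if l \<in> L then -1 else 1) * a $ l,
       \<chi> l. (if l \<in> L then -1 else 1) * \<theta> $ l))"

definition Rmap :: "('n \<Rightarrow> 'n) \<Rightarrow> ('n::finite) pt \<Rightarrow> 'n pt" where
  "Rmap \<sigma> = (\<lambda>(w, a, \<theta>). (w, \<chi> l. a $ (inv_into UNIV \<sigma> l), \<chi> l. \<theta> $ (inv_into UNIV \<sigma> l)))"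

definition Mmap :: "complex \<Rightarrow> ('n::finite) pt \<Rightarrow> 'n pt" where
  "Mmap \<alpha> = (\<lambda>(w, a, \<theta>). (\<alpha> * w, \<chi> l. \<alpha> * a $ l, \<theta>))"

definition Aut :: "(('n::finite) pt \<Rightarrow> 'n pt) set" where
  "Aut = {g. g \<in> extensional DN \<and> (\<exists>h. homeomorphism DN DN g h)}"

definition AutGrp :: "(('n::finite) pt \<Rightarrow> 'n pt) monoid" where
  "AutGrp = \<lparr>carrier = Aut, mult = (\<lambda>f g. compose DN f g), one = restrict id DN\<rparr>"

definition Aut_pi :: "(('n::finite) pt \<Rightarrow> 'n pt) set" where
  "Aut_pi = {g \<in> Aut. \<forall>x\<in>DN. piN (g x) = piN x}"

definition frakT :: "(('n::finite) pt \<Rightarrow> 'n pt) set" where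
  "frakT = generate AutGrp {restrict (Tmap L) DN | L. True}"

definition frakR :: "(('n::finite) pt \<Rightarrow> 'n pt) set" where
  "frakR = generate AutGrp {restrict (Rmap \<sigma>) DN | \<sigma>. \<sigma> permutes (UNIV::'n set)}"

definition frakM :: "(('n::finite) pt \<Rightarrow> 'n pt) set" where
  "frakM = generate AutGrp {restrict (Mmap \<alpha>) DN | \<alpha>. \<alpha> \<noteq> 0}"

definition frakG :: "(('n::finite) pt \<Rightarrow> 'n pt) set" where
  "frakG = (Aut_pi \<inter> normalizer AutGrp frakM) <#>\<^bsub>AutGrp\<^esub> frakM"

definition GN :: "(('n::finite) pt \<Rightarrow> 'n pt) set" where
  "GN = (frakT <#>\<^bsub>AutGrp\<^esub> frakR) <#>\<^bsub>AutGrp\<^esub> frakM"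

definition TRM :: "'n set \<Rightarrow> ('n \<Rightarrow> 'n) \<Rightarrow> complex \<Rightarrow> ('n::finite) pt \<Rightarrow> 'n pt" where
  "TRM L \<sigma> \<alpha> = restrict (Tmap L \<circ> Rmap \<sigma> \<circ> Mmap \<alpha>) DN"

definition signperm_grp :: "(('n::finite \<Rightarrow> int) \<times> ('n \<Rightarrow> 'n)) monoid" where
  "signperm_grp = \<lparr>carrier = {(\<epsilon>, \<sigma>). (\<forall>l. \<epsilon> l \<in> {1, -1}) \<and> \<sigma> permutes (UNIV::'n set)},
     mult = (\<lambda>(\<epsilon>1, \<sigma>1) (\<epsilon>2, \<sigma>2). (\<lambda>l. \<epsilon>1 l * \<epsilon>2 (inv_into UNIV \<sigma>1 l), \<sigma>1 \<circ> \<sigma>2)),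
     one = (\<lambda>l. 1, id)\<rparr>"

definition Cstar_grp :: "complex monoid" where
  "Cstar_grp = \<lparr>carrier = UNIV - {0}, mult = (*), one = 1\<rparr>"

end

theory Submission
  imports Defs
begin

(* T_L, R_sigma and M_alpha are continuous, preserve D_N and have inverses of the same kind,
   so they are homeomorphisms of D_N. They obey T_A T_B = T_(A xor B),
   R_sigma T_L = T_(sigma L) R_sigma and R_sigma R_tau = R_(sigma tau), and M_alpha commutes
   with T_L and R_sigma. These relations give the multiplication law, show that each of the
   families T, R, M and TRM is already a subgroup (hence equal to the group it generates), and
   put T_L R_sigma into the centralizer, a fortiori the normalizer, of the M_alpha. R_sigma
   permutes the summands of pi, and T_L preserves pi because for z ~= 0 exactly one of z and -z
   lies in -C. Evaluating T_L R_sigma M_alpha at (1, 0, 1/2) and (1, e_m, 1/2) recovers alpha,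
   sigma and L, so (eps, sigma, alpha) maps isomorphically onto G_N via
   T_(eps^-1(-1)) R_sigma M_alpha. *)

lemma Tmap_apply [simp]:
  "Tmap L (w, a, \<theta>) = (w - Tr a L,
     \<chi> l. (if l \<in> L then -1 else 1) * a $ l, \<chi> l. (if l \<in> L then -1 else 1) * \<theta> $ l)"
  by (simp add: Tmap_def)

lemma Rmap_apply [simp]:
  "Rmap s (w, a, \<theta>) = (w, \<chi> l. a $ inv_into UNIV s l, \<chi> l. \<theta> $ inv_into UNIV s l)"
  by (simp add: Rmap_def)

lemma Mmap_apply [simp]: "Mmap c (w, a, \<theta>) = (c * w, \<chi> l. c * a $ l, \<theta>)"
  by (simp add: Mmap_def)

lemma Tr_sign_flip:
  "Tr (\<chi> l. (if l \<in> B then -1 else 1) * a $ l) A = Tr a (A - B) - Tr a (A \<inter> B)"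
proof -
  have "Tr (\<chi> l. (if l \<in> B then -1 else 1) * a $ l) A
      = (\<Sum>l\<in>A \<inter> B. (if l \<in> B then -1 else 1) * a $ l)
        + (\<Sum>l\<in>A - B. (if l \<in> B then -1 else 1) * a $ l)"
    unfolding Tr_def by (simp add: sum.Int_Diff[of A _ B])
  also have "\<dots> = - Tr a (A \<inter> B) + Tr a (A - B)"
    unfolding Tr_def by (simp add: sum_negf)
  finally show ?thesis by simp
qed

lemma in_symdiff_iff: "l \<in> symdiff A B \<longleftrightarrow> (l \<in> A \<longleftrightarrow> l \<notin> B)"
  by (auto simp: symdiff_def)

lemma symdiff_empty [simp]: "symdiff L {} = L" "symdiff {} L = L" "symdiff L L = {}"
  by (auto simp: symdiff_def)

lemma Tmap_Tmap: "Tmap A (Tmap B p) = Tmap (symdiff A B) p"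
proof -
  obtain w a \<theta> where p: "p = (w, a, \<theta>)" by (cases p)
  have "Tr a B = Tr a (B - A) + Tr a (A \<inter> B)"
    unfolding Tr_def using sum.Int_Diff[of B "\<lambda>l. a $ l" A]
    by (simp add: Int_commute add.commute)
  moreover have "Tr a (symdiff A B) = Tr a (A - B) + Tr a (B - A)"
    unfolding Tr_def symdiff_def by (rule sum.union_disjoint) auto
  ultimately show ?thesis
    unfolding p by (auto simp: Tr_sign_flip vec_eq_iff in_symdiff_iff)
qed

lemma Tmap_empty: "Tmap {} p = p"
  by (cases p) (simp add: Tr_def vec_eq_iff)

lemma Rmap_id: "Rmap id p = p"
  by (cases p) (simp add: vec_eq_iff)

lemma Mmap_1: "Mmap 1 p = p"
  by (cases p) (simp add: vec_eq_iff)

lemma Mmap_Mmap: "Mmap c (Mmap d p) = Mmap (c * d) p"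
  by (cases p) (simp add: vec_eq_iff)

lemma Mmap_Tmap_commute: "Mmap c (Tmap L p) = Tmap L (Mmap c p)"
  by (cases p) (simp add: vec_eq_iff Tr_def sum_distrib_left right_diff_distrib)

lemma Mmap_Rmap_commute: "Mmap c (Rmap s p) = Rmap s (Mmap c p)"
  by (cases p) (simp add: vec_eq_iff)

lemma inv_into_comp_permutes:
  assumes "s1 permutes UNIV" "s2 permutes UNIV"
  shows "inv_into UNIV (s1 \<circ> s2) = inv_into UNIV s2 \<circ> inv_into UNIV s1"
  using assms by (simp add: o_inv_distrib permutes_bij)

lemma Rmap_Rmap:
  assumes "s1 permutes UNIV" "s2 permutes UNIV"
  shows "Rmap s1 (Rmap s2 p) = Rmap (s1 \<circ> s2) p"
  using assms by (cases p) (simp add: vec_eq_iff inv_into_comp_permutes)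

lemma Rmap_Tmap:
  assumes "s permutes UNIV"
  shows "Rmap s (Tmap L p) = Tmap (s ` L) (Rmap s p)"
proof -
  obtain w a \<theta> where p: "p = (w, a, \<theta>)" by (cases p)
  have mem: "l \<in> s ` L \<longleftrightarrow> inv_into UNIV s l \<in> L" for l
    using assms by (metis image_iff permutes_inverses(1,2))
  have "inj_on s L" using assms permutes_inj by (metis inj_on_subset subset_UNIV)
  then have "Tr (\<chi> l. a $ inv_into UNIV s l) (s ` L) = Tr a L"
    unfolding Tr_def using assms by (simp add: sum.reindex permutes_inverses(2))
  then show ?thesis unfolding p by (simp add: vec_eq_iff mem)
qed

lemma Tmap_Rmap_Mmap_compose:
  assumes "s1 permutes UNIV" "s2 permutes UNIV"
  shows "Tmap L1 (Rmap s1 (Mmap c1 (Tmap L2 (Rmap s2 (Mmap c2 p)))))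
       = Tmap (symdiff L1 (s1 ` L2)) (Rmap (s1 \<circ> s2) (Mmap (c1 * c2) p))"
  by (simp add: Mmap_Tmap_commute Mmap_Rmap_commute Mmap_Mmap Rmap_Tmap Tmap_Tmap Rmap_Rmap assms)

lemma DN_iff: "(w, a, \<theta>) \<in> DN \<longleftrightarrow> (\<forall>l. a $ l = 0 \<longrightarrow> \<theta> $ l \<notin> \<int>)"
  by (simp add: DN_def)

lemma Tmap_in_DN: "p \<in> DN \<Longrightarrow> Tmap L p \<in> DN"
  by (cases p) (auto simp: DN_iff split: if_splits)

lemma Rmap_in_DN: "p \<in> DN \<Longrightarrow> Rmap s p \<in> DN"
  by (cases p) (auto simp: DN_iff)

lemma Mmap_in_DN: "c \<noteq> 0 \<Longrightarrow> p \<in> DN \<Longrightarrow> Mmap c p \<in> DN"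
  by (cases p) (auto simp: DN_iff)

lemma continuous_on_Tmap: "continuous_on S (Tmap L)"
proof -
  have e: "Tmap L = (\<lambda>p. (fst p - (\<Sum>l\<in>L. fst (snd p) $ l),
       \<chi> l. (if l \<in> L then -1 else 1) * fst (snd p) $ l,
       \<chi> l. (if l \<in> L then -1 else 1) * snd (snd p) $ l))"
    by (auto simp: fun_eq_iff Tr_def)
  show ?thesis unfolding e by (intro continuous_intros continuous_on_vec_lambda)
qed

lemma continuous_on_Rmap: "continuous_on S (Rmap s)"
proof -
  have e: "Rmap s = (\<lambda>p. (fst p, \<chi> l. fst (snd p) $ inv_into UNIV s l, \<chi> l. snd (snd p) $ inv_into UNIV s l))"
    by (auto simp: fun_eq_iff)
  show ?thesis unfolding e by (intro continuous_intros continuous_on_vec_lambda)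
qed

lemma continuous_on_Mmap: "continuous_on S (Mmap c)"
proof -
  have e: "Mmap c = (\<lambda>p. (c * fst p, \<chi> l. c * fst (snd p) $ l, snd (snd p)))"
    by (auto simp: fun_eq_iff)
  show ?thesis unfolding e by (intro continuous_intros continuous_on_vec_lambda)
qed

definition negcone_part :: "complex \<Rightarrow> complex" where
  "negcone_part z = (if z \<in> uminus ` Ccone then z else 0)"

lemma piN_eq: "piN (w, a, \<theta>) = w - (\<Sum>l\<in>UNIV. negcone_part (a $ l))"
  by (simp add: piN_def Tr_def negcone_part_def sum.inter_filter[symmetric])

lemma add_negcone_part_uminus: "z + negcone_part (- z) = negcone_part z"
proof -
  have "u \<in> uminus ` Ccone \<longleftrightarrow> - u \<in> Ccone" for u by force
  then show ?thesis by (auto simp: negcone_part_def Ccone_def complex_eq_iff)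
qed

lemma piN_Tmap: "piN (Tmap L p) = piN p"
proof -
  obtain w a \<theta> where p: "p = (w, a, \<theta>)" by (cases p)
  have "Tr a L + (\<Sum>l\<in>UNIV. negcone_part ((if l \<in> L then -1 else 1) * a $ l))
      = (\<Sum>l\<in>UNIV. (if l \<in> L then a $ l else 0)
                    + negcone_part ((if l \<in> L then -1 else 1) * a $ l))"
    by (simp add: Tr_def sum.inter_filter[symmetric] sum.distrib)
  also have "\<dots> = (\<Sum>l\<in>UNIV. negcone_part (a $ l))"
    using add_negcone_part_uminus by (intro sum.cong) simp_all
  finally show ?thesis unfolding p by (simp add: piN_eq algebra_simps)
qed

lemma piN_Rmap:
  assumes "s permutes UNIV"
  shows "piN (Rmap s p) = piN p"
proof -
  obtain w a \<theta> where p: "p = (w, a, \<theta>)" by (cases p)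
  have "(\<Sum>l\<in>UNIV. negcone_part (a $ inv_into UNIV s l)) = (\<Sum>l\<in>UNIV. negcone_part (a $ l))"
    using sum.permute[OF permutes_inv[OF assms], of "\<lambda>l. negcone_part (a $ l)"]
    by (simp add: o_def)
  then show ?thesis unfolding p by (simp add: piN_eq)
qed

lemma group_homeomorphisms:
  "group \<lparr>carrier = {g \<in> extensional S. \<exists>h. homeomorphism S S g h},
          mult = compose S, one = restrict id S\<rparr>"
  (is "group ?G")
proof (rule groupI)
  fix x y assume "x \<in> carrier ?G" "y \<in> carrier ?G"
  then obtain hx hy where "homeomorphism S S x hx" "homeomorphism S S y hy" by auto
  then have "homeomorphism S S (x \<circ> y) (hy \<circ> hx)" by (rule homeomorphism_compose[rotated])
  then have "homeomorphism S S (compose S x y) (hy \<circ> hx)"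
    by (rule homeomorphism_cong) (auto simp: compose_def)
  then show "x \<otimes>\<^bsub>?G\<^esub> y \<in> carrier ?G" by auto
next
  have "homeomorphism S S (restrict id S) (\<lambda>a. a)"
    by (rule homeomorphism_cong[OF homeomorphism_ident]) auto
  then show "\<one>\<^bsub>?G\<^esub> \<in> carrier ?G" by auto
next
  fix x y z assume "x \<in> carrier ?G" "y \<in> carrier ?G" "z \<in> carrier ?G"
  then have "z \<in> S \<rightarrow> S" unfolding homeomorphism_def by auto
  then show "x \<otimes>\<^bsub>?G\<^esub> y \<otimes>\<^bsub>?G\<^esub> z = x \<otimes>\<^bsub>?G\<^esub> (y \<otimes>\<^bsub>?G\<^esub> z)"
    by (simp add: compose_assoc)
next
  fix x assume "x \<in> carrier ?G"
  then show "\<one>\<^bsub>?G\<^esub> \<otimes>\<^bsub>?G\<^esub> x = x"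
    unfolding homeomorphism_def by (auto simp: compose_def fun_eq_iff extensional_def)
next
  fix x assume x: "x \<in> carrier ?G"
  then obtain h where h: "homeomorphism S S x h" by auto
  have "homeomorphism S S (restrict h S) x"
    by (rule homeomorphism_cong[OF homeomorphism_symD[OF h]]) auto
  moreover have "compose S (restrict h S) x = restrict id S"
    using h x unfolding homeomorphism_def by (auto simp: compose_def fun_eq_iff)
  ultimately show "\<exists>y\<in>carrier ?G. y \<otimes>\<^bsub>?G\<^esub> x = \<one>\<^bsub>?G\<^esub>"
    by (intro bexI[of _ "restrict h S"]) auto
qed

lemma group_AutGrp: "group AutGrp"
  unfolding AutGrp_def Aut_def by (rule group_homeomorphisms)

lemma AutGrp_simps [simp]:
  "carrier AutGrp = Aut" "mult AutGrp = compose DN" "one AutGrp = restrict id DN"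
  by (simp_all add: AutGrp_def)

lemma TRM_apply: "p \<in> DN \<Longrightarrow> TRM L s c p = Tmap L (Rmap s (Mmap c p))"
  by (simp add: TRM_def)

lemma TRM_in_DN: "c \<noteq> 0 \<Longrightarrow> p \<in> DN \<Longrightarrow> TRM L s c p \<in> DN"
  by (simp add: TRM_apply Tmap_in_DN Rmap_in_DN Mmap_in_DN)

lemma continuous_on_TRM: "continuous_on DN (TRM L s c)"
proof -
  have "continuous_on DN (\<lambda>p. Tmap L (Rmap s (Mmap c p)))"
    by (intro continuous_on_compose2[OF continuous_on_Tmap _ subset_UNIV]
        continuous_on_compose2[OF continuous_on_Rmap continuous_on_Mmap subset_UNIV])
  then show ?thesis by (rule continuous_on_cong[THEN iffD1, rotated 2]) (simp_all add: TRM_apply)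
qed

lemma compose_TRM:
  assumes "s1 permutes UNIV" "s2 permutes UNIV" "c2 \<noteq> 0"
  shows "compose DN (TRM L1 s1 c1) (TRM L2 s2 c2) = TRM (symdiff L1 (s1 ` L2)) (s1 \<circ> s2) (c1 * c2)"
proof
  fix p
  show "compose DN (TRM L1 s1 c1) (TRM L2 s2 c2) p = TRM (symdiff L1 (s1 ` L2)) (s1 \<circ> s2) (c1 * c2) p"
  proof (cases "p \<in> DN")
    case True
    then have "Tmap L2 (Rmap s2 (Mmap c2 p)) \<in> DN"
      using assms by (simp add: Tmap_in_DN Rmap_in_DN Mmap_in_DN)
    with True show ?thesis
      by (simp add: compose_eq TRM_apply Tmap_Rmap_Mmap_compose assms)
  qed (simp add: compose_def TRM_def)
qed

lemma TRM_id: "TRM {} id 1 = restrict id DN"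
  by (simp add: TRM_def Tmap_empty Rmap_id Mmap_1 fun_eq_iff Tr_def)

lemma compose_TRM_inverse:
  assumes "s permutes UNIV" "c \<noteq> 0"
  shows "compose DN (TRM (inv_into UNIV s ` L) (inv_into UNIV s) (1 / c)) (TRM L s c) = restrict id DN"
    and "compose DN (TRM L s c) (TRM (inv_into UNIV s ` L) (inv_into UNIV s) (1 / c)) = restrict id DN"
  using assms
  by (simp_all add: compose_TRM permutes_inv permutes_inv_o image_comp TRM_id)

lemma TRM_in_Aut:
  assumes "s permutes UNIV" "c \<noteq> 0"
  shows "TRM L s c \<in> Aut"
proof -
  have "homeomorphism DN DN (TRM L s c) (TRM (inv_into UNIV s ` L) (inv_into UNIV s) (1 / c))"
  proof (rule homeomorphismI)
    show "TRM L s c ` DN \<subseteq> DN" "TRM (inv_into UNIV s ` L) (inv_into UNIV s) (1 / c) ` DN \<subseteq> DN"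
      using assms by (auto simp: TRM_in_DN)
    show "TRM (inv_into UNIV s ` L) (inv_into UNIV s) (1 / c) (TRM L s c x) = x" if "x \<in> DN" for x
      using fun_cong[OF compose_TRM_inverse(1)[OF assms, of L], of x] that
      by (simp add: compose_eq)
    show "TRM L s c (TRM (inv_into UNIV s ` L) (inv_into UNIV s) (1 / c) x) = x" if "x \<in> DN" for x
      using fun_cong[OF compose_TRM_inverse(2)[OF assms, of L], of x] that
      by (simp add: compose_eq)
  qed (rule continuous_on_TRM)+
  then show ?thesis by (auto simp: Aut_def TRM_def)
qed

lemma inv_TRM:
  assumes "s permutes UNIV" "c \<noteq> 0"
  shows "inv\<^bsub>AutGrp\<^esub> (TRM L s c) = TRM (inv_into UNIV s ` L) (inv_into UNIV s) (1 / c)"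
  using assms
  by (intro group.inv_equality[OF group_AutGrp])
    (simp_all add: compose_TRM_inverse TRM_in_Aut permutes_inv)

lemma subgroup_TRM_family:
  fixes P :: "'n::finite set \<Rightarrow> ('n \<Rightarrow> 'n) \<Rightarrow> complex \<Rightarrow> bool"
  assumes P_imp: "\<And>L s c. P L s c \<Longrightarrow> s permutes UNIV \<and> c \<noteq> 0"
    and P_id: "P {} id 1"
    and P_mult: "\<And>L1 s1 c1 L2 s2 c2. P L1 s1 c1 \<Longrightarrow> P L2 s2 c2
                   \<Longrightarrow> P (symdiff L1 (s1 ` L2)) (s1 \<circ> s2) (c1 * c2)"
    and P_inv: "\<And>L s c. P L s c \<Longrightarrow> P (inv_into UNIV s ` L) (inv_into UNIV s) (1 / c)"
  shows "subgroup {TRM L s c | L s c. P L s c} AutGrp"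
proof (rule group.subgroupI[OF group_AutGrp])
  show "{TRM L s c | L s c. P L s c} \<subseteq> carrier AutGrp"
    by (auto dest: P_imp intro: TRM_in_Aut)
  show "{TRM L s c | L s c. P L s c} \<noteq> {}"
    using P_id by blast
next
  fix g assume "g \<in> {TRM L s c | L s c. P L s c}"
  then obtain L s c where g: "g = TRM L s c" and P: "P L s c" by blast
  have "inv\<^bsub>AutGrp\<^esub> g = TRM (inv_into UNIV s ` L) (inv_into UNIV s) (1 / c)"
    unfolding g using P_imp[OF P] by (simp add: inv_TRM)
  then show "inv\<^bsub>AutGrp\<^esub> g \<in> {TRM L s c | L s c. P L s c}"
    using P_inv[OF P] by blast
next
  fix g h assume "g \<in> {TRM L s c | L s c. P L s c}" "h \<in> {TRM L s c | L s c. P L s c}"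
  then obtain L1 s1 c1 L2 s2 c2 where g: "g = TRM L1 s1 c1" and P1: "P L1 s1 c1"
    and h: "h = TRM L2 s2 c2" and P2: "P L2 s2 c2"
    by blast
  have "g \<otimes>\<^bsub>AutGrp\<^esub> h = TRM (symdiff L1 (s1 ` L2)) (s1 \<circ> s2) (c1 * c2)"
    unfolding g h using P_imp[OF P1] P_imp[OF P2] by (simp add: compose_TRM)
  then show "g \<otimes>\<^bsub>AutGrp\<^esub> h \<in> {TRM L s c | L s c. P L s c}"
    using P_mult[OF P1 P2] by blast
qed

lemma (in group) generate_subgroup_eq: "subgroup H G \<Longrightarrow> generate G H = H"
  using generate_subgroup_incl[of H H] generate.incl[of _ H G] by blast

lemma restrict_Tmap_eq_TRM: "restrict (Tmap L) DN = TRM L id 1"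
  by (simp add: TRM_def o_def Rmap_id Mmap_1)

lemma restrict_Rmap_eq_TRM: "restrict (Rmap s) DN = TRM {} s 1"
  by (simp add: TRM_def o_def Tmap_empty Mmap_1)

lemma restrict_Mmap_eq_TRM: "restrict (Mmap c) DN = TRM {} id c"
  by (simp add: TRM_def o_def Tmap_empty Rmap_id)

lemma frakT_eq: "frakT = {TRM L id 1 | L. True}"
proof -
  have "subgroup {TRM L s c | L s c. s = id \<and> c = 1} AutGrp"
    by (rule subgroup_TRM_family) (auto simp: permutes_id)
  also have "{TRM L s c | L s c. s = id \<and> c = 1} = {TRM L id 1 | L. True}" by blast
  finally have "subgroup {TRM L id 1 | L. True} AutGrp" .
  then show ?thesis
    unfolding frakT_def restrict_Tmap_eq_TRM by (rule group.generate_subgroup_eq[OF group_AutGrp])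
qed

lemma frakR_eq: "frakR = {TRM {} s 1 | s. s permutes UNIV}"
proof -
  have "subgroup {TRM L s c | L s c. L = {} \<and> s permutes UNIV \<and> c = 1} AutGrp"
    by (rule subgroup_TRM_family) (auto simp: permutes_compose permutes_inv)
  also have "{TRM L s c | L s c. L = {} \<and> s permutes UNIV \<and> c = 1}
      = {TRM {} s 1 | s. s permutes UNIV}"
    by blast
  finally have "subgroup {TRM {} s 1 | s. s permutes UNIV} AutGrp" .
  then show ?thesis
    unfolding frakR_def restrict_Rmap_eq_TRM by (rule group.generate_subgroup_eq[OF group_AutGrp])
qed

lemma frakM_eq: "frakM = {TRM {} id c | c. c \<noteq> 0}"
proof -
  have "subgroup {TRM L s c | L s c. L = {} \<and> s = id \<and> c \<noteq> 0} AutGrp"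
    by (rule subgroup_TRM_family) auto
  also have "{TRM L s c | L s c. L = {} \<and> s = id \<and> c \<noteq> 0} = {TRM {} id c | c. c \<noteq> 0}" by blast
  finally have "subgroup {TRM {} id c | c. c \<noteq> 0} AutGrp" .
  then show ?thesis
    unfolding frakM_def restrict_Mmap_eq_TRM by (rule group.generate_subgroup_eq[OF group_AutGrp])
qed

lemma TRM_factor:
  assumes "s permutes UNIV" "c \<noteq> 0"
  shows "TRM L s c = compose DN (compose DN (TRM L id 1) (TRM {} s 1)) (TRM {} id c)"
  using assms by (simp add: compose_TRM permutes_id)

lemma mem_set_mult_iff: "z \<in> H <#>\<^bsub>G\<^esub> K \<longleftrightarrow> (\<exists>x\<in>H. \<exists>y\<in>K. z = x \<otimes>\<^bsub>G\<^esub> y)"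
  by (auto simp: set_mult_def)

lemma GN_eq: "GN = {TRM L s c | L s c. s permutes UNIV \<and> c \<noteq> 0}"
proof (intro equalityI subsetI)
  fix g assume "g \<in> GN"
  then obtain L s c where s: "s permutes UNIV" and c: "c \<noteq> 0"
    and "g = compose DN (compose DN (TRM L id 1) (TRM {} s 1)) (TRM {} id c)"
    unfolding GN_def frakT_eq frakR_eq frakM_eq by (auto simp: mem_set_mult_iff)
  then have "g = TRM L s c" by (simp only: TRM_factor[OF s c])
  with s c show "g \<in> {TRM L s c | L s c. s permutes UNIV \<and> c \<noteq> 0}" by blast
next
  fix g assume "g \<in> {TRM L s c | L s c. s permutes UNIV \<and> c \<noteq> 0}"
  then obtain L s c where s: "s permutes UNIV" and c: "c \<noteq> 0" and g: "g = TRM L s c" by blast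
  have "compose DN (TRM L id 1) (TRM {} s 1) \<in> frakT <#>\<^bsub>AutGrp\<^esub> frakR"
    unfolding mem_set_mult_iff frakT_eq frakR_eq using s by auto
  moreover have "TRM {} id c \<in> frakM"
    unfolding frakM_eq using c by blast
  ultimately show "g \<in> GN"
    unfolding GN_def g TRM_factor[OF s c] by (subst mem_set_mult_iff) auto
qed

lemma subgroup_GN: "subgroup GN AutGrp"
  unfolding GN_eq
  by (rule subgroup_TRM_family) (auto simp: permutes_id permutes_compose permutes_inv)

lemma (in group) commuting_in_normalizer:
  assumes "g \<in> carrier G" "H \<subseteq> carrier G" "\<And>h. h \<in> H \<Longrightarrow> g \<otimes> h = h \<otimes> g"
  shows "g \<in> normalizer G H"
proof -
  have "g \<otimes> h \<otimes> inv g = h" if "h \<in> H" for h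
    using assms that by (metis m_assoc r_inv r_one inv_closed subsetD)
  then have "g <# H #> inv g = H" unfolding l_coset_def r_coset_def by force
  then show ?thesis using assms unfolding normalizer_def stabilizer_def by simp
qed

lemma TRM_in_normalizer_frakM:
  assumes "s permutes UNIV"
  shows "TRM L s 1 \<in> normalizer AutGrp frakM"
proof (rule group.commuting_in_normalizer[OF group_AutGrp])
  show "TRM L s 1 \<in> carrier AutGrp" "frakM \<subseteq> carrier AutGrp"
    using assms by (auto simp: frakM_eq TRM_in_Aut)
  show "TRM L s 1 \<otimes>\<^bsub>AutGrp\<^esub> h = h \<otimes>\<^bsub>AutGrp\<^esub> TRM L s 1" if "h \<in> frakM" for h
    using that assms by (auto simp: frakM_eq compose_TRM permutes_id)
qed

lemma TRM_in_Aut_pi: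
  assumes "s permutes UNIV"
  shows "TRM L s 1 \<in> Aut_pi"
  using assms TRM_in_Aut[OF assms]
  by (simp add: Aut_pi_def TRM_apply Mmap_1 piN_Tmap piN_Rmap)

lemma GN_subset_frakG: "GN \<subseteq> frakG"
proof
  fix g assume "g \<in> GN"
  then obtain L s c where g: "g = TRM L s c" "s permutes UNIV" "c \<noteq> 0"
    unfolding GN_eq by blast
  then have "g = compose DN (TRM L s 1) (TRM {} id c)"
    by (simp add: compose_TRM permutes_id)
  moreover have "TRM L s 1 \<in> Aut_pi \<inter> normalizer AutGrp frakM"
    using TRM_in_Aut_pi TRM_in_normalizer_frakM g(2) by blast
  moreover have "TRM {} id c \<in> frakM"
    using g(3) by (auto simp: frakM_eq)
  ultimately show "g \<in> frakG"
    unfolding frakG_def mem_set_mult_iff by auto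
qed

lemma signperm_grp_simps:
  "(e, s) \<in> carrier signperm_grp \<longleftrightarrow> (\<forall>l. e l \<in> {1, -1}) \<and> s permutes UNIV"
  "(e1, s1) \<otimes>\<^bsub>signperm_grp\<^esub> (e2, s2) = (\<lambda>l. e1 l * e2 (inv_into UNIV s1 l), s1 \<circ> s2)"
  "\<one>\<^bsub>signperm_grp\<^esub> = (\<lambda>l. 1, id)"
  by (simp_all add: signperm_grp_def)

lemma Cstar_grp_simps:
  "c \<in> carrier Cstar_grp \<longleftrightarrow> c \<noteq> 0" "a \<otimes>\<^bsub>Cstar_grp\<^esub> b = a * b" "\<one>\<^bsub>Cstar_grp\<^esub> = 1"
  by (simp_all add: Cstar_grp_def)

lemma sign_mult_closed: "a \<in> {1, -1} \<Longrightarrow> b \<in> {1, -1} \<Longrightarrow> a * b \<in> {1, -1 :: int}"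
  by auto

lemma group_signperm_grp: "group (signperm_grp :: (('n::finite \<Rightarrow> int) \<times> ('n \<Rightarrow> 'n)) monoid)"
  (is "group ?G")
proof (rule groupI)
  fix x y assume "x \<in> carrier ?G" "y \<in> carrier ?G"
  moreover obtain e1 s1 where x: "x = (e1, s1)" by (cases x)
  moreover obtain e2 s2 where y: "y = (e2, s2)" by (cases y)
  ultimately have e1: "\<forall>l. e1 l \<in> {1, -1}" and e2: "\<forall>l. e2 l \<in> {1, -1}"
    and "s1 permutes UNIV" "s2 permutes UNIV"
    by (simp_all add: signperm_grp_simps)
  moreover have "\<forall>l. e1 l * e2 (inv_into UNIV s1 l) \<in> {1, -1}"
    using sign_mult_closed[OF e1[rule_format] e2[rule_format]] by blast
  ultimately show "x \<otimes>\<^bsub>?G\<^esub> y \<in> carrier ?G"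
    by (simp only: x y signperm_grp_simps permutes_compose simp_thms)
next
  show "\<one>\<^bsub>?G\<^esub> \<in> carrier ?G"
    by (simp add: signperm_grp_simps permutes_id)
next
  fix x y z assume "x \<in> carrier ?G" "y \<in> carrier ?G" "z \<in> carrier ?G"
  moreover obtain e1 s1 where x: "x = (e1, s1)" by (cases x)
  moreover obtain e2 s2 where y: "y = (e2, s2)" by (cases y)
  moreover obtain e3 s3 where z: "z = (e3, s3)" by (cases z)
  ultimately have "s1 permutes UNIV" "s2 permutes UNIV"
    by (simp_all add: signperm_grp_simps)
  then show "x \<otimes>\<^bsub>?G\<^esub> y \<otimes>\<^bsub>?G\<^esub> z = x \<otimes>\<^bsub>?G\<^esub> (y \<otimes>\<^bsub>?G\<^esub> z)"
    by (simp add: x y z signperm_grp_simps inv_into_comp_permutes o_assoc mult.assoc)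
next
  fix x assume "x \<in> carrier ?G"
  moreover obtain e s where "x = (e, s)" by (cases x)
  ultimately show "\<one>\<^bsub>?G\<^esub> \<otimes>\<^bsub>?G\<^esub> x = x"
    by (simp add: signperm_grp_simps)
next
  fix x assume "x \<in> carrier ?G"
  moreover obtain e s where x: "x = (e, s)" by (cases x)
  ultimately have e: "\<forall>l. e l \<in> {1, -1}" and s: "s permutes UNIV"
    by (simp_all add: signperm_grp_simps)
  have "e (s l) * e (s l) = 1" for l
    using e[rule_format, of "s l"] by auto
  then have "(e \<circ> s, inv_into UNIV s) \<otimes>\<^bsub>?G\<^esub> x = \<one>\<^bsub>?G\<^esub>"
    using s by (simp add: x signperm_grp_simps inv_inv_eq permutes_bij permutes_inv_o)
  moreover have "(e \<circ> s, inv_into UNIV s) \<in> carrier ?G"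
    using e s by (simp add: signperm_grp_simps permutes_inv)
  ultimately show "\<exists>y\<in>carrier ?G. y \<otimes>\<^bsub>?G\<^esub> x = \<one>\<^bsub>?G\<^esub>"
    by blast
qed

lemma group_Cstar_grp: "group Cstar_grp"
proof (rule groupI)
  fix x assume "x \<in> carrier Cstar_grp"
  then show "\<exists>y\<in>carrier Cstar_grp. y \<otimes>\<^bsub>Cstar_grp\<^esub> x = \<one>\<^bsub>Cstar_grp\<^esub>"
    by (intro bexI[of _ "inverse x"]) (auto simp: Cstar_grp_def)
qed (auto simp: Cstar_grp_def)

lemma TRM_at_zero: "fst (TRM L s c (1, 0, \<chi> l. 1 / 2)) = c"
  by (simp add: TRM_def DN_iff Tr_def)

lemma TRM_at_axis:
  assumes "s permutes UNIV"
  shows "fst (snd (TRM L s c (1, axis m 1, \<chi> l. 1 / 2)))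
       = (\<chi> l. if l = s m then (if l \<in> L then - c else c) else 0)"
proof -
  have "inv_into UNIV s l = m \<longleftrightarrow> l = s m" for l
    using assms by (metis permutes_inverses(1,2))
  then show ?thesis by (simp add: TRM_def DN_iff axis_def vec_eq_iff)
qed

lemma TRM_eq_TRM_iff:
  assumes "s permutes UNIV" "s' permutes UNIV" "c \<noteq> 0"
  shows "TRM L s c = TRM L' s' c' \<longleftrightarrow> L = L' \<and> s = s' \<and> c = c'"
proof
  assume eq: "TRM L s c = TRM L' s' c'"
  then have c: "c' = c" using TRM_at_zero by metis
  have key: "s' m = s m \<and> (s m \<in> L \<longleftrightarrow> s m \<in> L')" for m
  proof -
    have "fst (snd (TRM L s c (1, axis m 1, \<chi> l. 1 / 2))) $ s m
        = fst (snd (TRM L' s' c' (1, axis m 1, \<chi> l. 1 / 2))) $ s m"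
      by (simp only: eq)
    then have "(if s m \<in> L then - c else c)
             = (if s m = s' m then (if s m \<in> L' then - c else c) else 0)"
      by (simp add: TRM_at_axis assms c)
    then show ?thesis using assms(3) by (auto split: if_splits)
  qed
  then have "s' = s" by (simp add: fun_eq_iff)
  moreover have "L = L'"
  proof (rule Set.set_eqI)
    fix l
    have "s (inv_into UNIV s l) = l" using assms(1) by (rule permutes_inverses(1))
    then show "l \<in> L \<longleftrightarrow> l \<in> L'" using key[of "inv_into UNIV s l"] by simp
  qed
  ultimately show "L = L' \<and> s = s' \<and> c = c'" using c by simp
qed simp

lemma sign_mult_eq_minus_one_iff:
  "a \<in> {1, -1} \<Longrightarrow> b \<in> {1, -1} \<Longrightarrow> a * b = -1 \<longleftrightarrow> (a = -1 \<longleftrightarrow> b \<noteq> (-1 :: int))"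
  by auto

lemma sign_set_mult:
  assumes "\<forall>l. e1 l \<in> {1, -1 :: int}" "\<forall>l. e2 l \<in> {1, -1 :: int}" "s permutes UNIV"
  shows "{l. e1 l * e2 (inv_into UNIV s l) = -1} = symdiff {l. e1 l = -1} (s ` {l. e2 l = -1})"
proof -
  have image: "s ` {l. e2 l = -1} = {l. e2 (inv_into UNIV s l) = -1}"
    using assms(3) by (simp add: bij_image_Collect_eq permutes_bij)
  have "e1 l * e2 (inv_into UNIV s l) = -1 \<longleftrightarrow> (e1 l = -1 \<longleftrightarrow> e2 (inv_into UNIV s l) \<noteq> -1)" for l
    using assms(1)[rule_format, of l] assms(2)[rule_format, of "inv_into UNIV s l"]
    by (rule sign_mult_eq_minus_one_iff)
  then show ?thesis
    unfolding image by (intro Set.set_eqI) (simp add: in_symdiff_iff)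
qed

definition TRM_of :: "(('n::finite \<Rightarrow> int) \<times> ('n \<Rightarrow> 'n)) \<times> complex \<Rightarrow> 'n pt \<Rightarrow> 'n pt" where
  "TRM_of = (\<lambda>((e, s), c). TRM {l. e l = -1} s c)"

lemma TRM_of_iso: "TRM_of \<in> iso (signperm_grp \<times>\<times> Cstar_grp) (AutGrp\<lparr>carrier := GN\<rparr>)"
proof -
  let ?D = "signperm_grp \<times>\<times> Cstar_grp"
  have image: "TRM_of ` carrier ?D = GN"
  proof (intro equalityI subsetI)
    fix g assume "g \<in> TRM_of ` carrier ?D"
    then obtain x where x: "x \<in> carrier ?D" and g: "g = TRM_of x" by blast
    obtain e s c where "x = ((e, s), c)" by (cases x) auto
    with x g show "g \<in> GN" by (auto simp: GN_eq TRM_of_def signperm_grp_simps Cstar_grp_simps)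
  next
    fix g assume "g \<in> GN"
    then obtain L s c where "g = TRM L s c" "s permutes UNIV" "c \<noteq> 0" by (auto simp: GN_eq)
    then have "g = TRM_of ((\<lambda>l. if l \<in> L then -1 else 1, s), c)"
      and "((\<lambda>l. if l \<in> L then -1 else 1, s), c) \<in> carrier ?D"
      by (simp_all add: TRM_of_def signperm_grp_simps Cstar_grp_simps)
    then show "g \<in> TRM_of ` carrier ?D" by blast
  qed
  have "TRM_of \<in> hom ?D (AutGrp\<lparr>carrier := GN\<rparr>)"
  proof (rule homI)
    show "TRM_of x \<in> carrier (AutGrp\<lparr>carrier := GN\<rparr>)" if "x \<in> carrier ?D" for x
      using that image by auto
    show "TRM_of (x \<otimes>\<^bsub>?D\<^esub> y) = TRM_of x \<otimes>\<^bsub>AutGrp\<lparr>carrier := GN\<rparr>\<^esub> TRM_of y"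
      if "x \<in> carrier ?D" "y \<in> carrier ?D" for x y
    proof -
      obtain e1 s1 c1 where x: "x = ((e1, s1), c1)" by (cases x) auto
      obtain e2 s2 c2 where y: "y = ((e2, s2), c2)" by (cases y) auto
      show ?thesis
        using that unfolding x y
        by (simp add: TRM_of_def signperm_grp_simps Cstar_grp_simps compose_TRM sign_set_mult)
    qed
  qed
  moreover have "inj_on TRM_of (carrier ?D)"
  proof (rule inj_onI)
    fix x y assume "x \<in> carrier ?D" "y \<in> carrier ?D" "TRM_of x = TRM_of y"
    moreover obtain e1 s1 c1 where x: "x = ((e1, s1), c1)" by (cases x) auto
    moreover obtain e2 s2 c2 where y: "y = ((e2, s2), c2)" by (cases y) auto
    ultimately have e1: "\<forall>l. e1 l \<in> {1, -1}" and e2: "\<forall>l. e2 l \<in> {1, -1}"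
      and signs: "{l. e1 l = -1} = {l. e2 l = -1}" and "s1 = s2" "c1 = c2"
      by (auto simp: signperm_grp_simps Cstar_grp_simps TRM_of_def TRM_eq_TRM_iff)
    have "e1 l = e2 l" for l
    proof -
      from signs have "e1 l = -1 \<longleftrightarrow> e2 l = -1" by (simp add: set_eq_iff)
      with e1[rule_format, of l] e2[rule_format, of l] show ?thesis by auto
    qed
    with \<open>s1 = s2\<close> \<open>c1 = c2\<close> show "x = y" by (simp add: x y fun_eq_iff)
  qed
  ultimately show ?thesis
    using image by (simp add: iso_def bij_betw_def)
qed

lemma GN_iso_signperm_Cstar:
  "(AutGrp :: ('n::finite pt \<Rightarrow> 'n pt) monoid)\<lparr>carrier := GN\<rparr>
     \<cong> (signperm_grp :: (('n \<Rightarrow> int) \<times> ('n \<Rightarrow> 'n)) monoid) \<times>\<times> Cstar_grp"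
proof -
  have "(signperm_grp :: (('n \<Rightarrow> int) \<times> ('n \<Rightarrow> 'n)) monoid) \<times>\<times> Cstar_grp
      \<cong> (AutGrp :: ('n pt \<Rightarrow> 'n pt) monoid)\<lparr>carrier := GN\<rparr>"
    using TRM_of_iso by (auto simp: is_iso_def)
  then show ?thesis
    by (rule group.iso_sym[OF DirProd_group[OF group_signperm_grp group_Cstar_grp]])
qed

theorem proposition2:
  shows "(\<forall>L. restrict (Tmap L) DN \<in> (frakG :: ('n::finite pt \<Rightarrow> 'n pt) set))
    \<and> (\<forall>\<sigma>. \<sigma> permutes (UNIV::'n set) \<longrightarrow> restrict (Rmap \<sigma>) DN \<in> (frakG :: ('n pt \<Rightarrow> 'n pt) set))
    \<and> (\<forall>\<alpha>. \<alpha> \<noteq> 0 \<longrightarrow> restrict (Mmap \<alpha>) DN \<in> (frakG :: ('n pt \<Rightarrow> 'n pt) set))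
    \<and> (\<forall>L1 L2 \<sigma>1 \<sigma>2 \<alpha>1 \<alpha>2. \<sigma>1 permutes (UNIV::'n set) \<longrightarrow> \<sigma>2 permutes (UNIV::'n set)
          \<longrightarrow> \<alpha>1 \<noteq> 0 \<longrightarrow> \<alpha>2 \<noteq> 0 \<longrightarrow>
          compose DN (TRM L1 \<sigma>1 \<alpha>1) (TRM L2 \<sigma>2 \<alpha>2)
            = TRM (symdiff L1 (\<sigma>1 ` L2)) (\<sigma>1 \<circ> \<sigma>2) (\<alpha>1 * \<alpha>2))
    \<and> GN = {TRM L \<sigma> \<alpha> | L \<sigma> \<alpha>. \<sigma> permutes (UNIV::'n set) \<and> \<alpha> \<noteq> 0}
    \<and> subgroup (GN :: ('n pt \<Rightarrow> 'n pt) set) AutGrp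
    \<and> (GN :: ('n pt \<Rightarrow> 'n pt) set) \<subseteq> frakG
    \<and> ((AutGrp :: ('n pt \<Rightarrow> 'n pt) monoid)\<lparr>carrier := GN\<rparr>) \<cong> DirProd (signperm_grp :: (('n \<Rightarrow> int) \<times> ('n \<Rightarrow> 'n)) monoid) Cstar_grp"
proof -
  have TRM_in_frakG: "TRM L s c \<in> frakG" if "s permutes UNIV" "c \<noteq> 0" for L s c
    using GN_subset_frakG that by (auto simp: GN_eq)
  show ?thesis
  proof (intro conjI allI impI)
    show "restrict (Tmap L) DN \<in> (frakG :: ('n pt \<Rightarrow> 'n pt) set)" for L
      unfolding restrict_Tmap_eq_TRM by (rule TRM_in_frakG) (simp_all add: permutes_id)
    show "restrict (Rmap s) DN \<in> (frakG :: ('n pt \<Rightarrow> 'n pt) set)" if "s permutes UNIV" for s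
      unfolding restrict_Rmap_eq_TRM using that by (rule TRM_in_frakG) simp
    show "restrict (Mmap c) DN \<in> (frakG :: ('n pt \<Rightarrow> 'n pt) set)" if "c \<noteq> 0" for c
      unfolding restrict_Mmap_eq_TRM using permutes_id that by (rule TRM_in_frakG)
    show "compose DN (TRM L1 s1 c1) (TRM L2 s2 c2)
        = (TRM (symdiff L1 (s1 ` L2)) (s1 \<circ> s2) (c1 * c2) :: 'n pt \<Rightarrow> 'n pt)"
      if "s1 permutes UNIV" "s2 permutes UNIV" "c1 \<noteq> 0" "c2 \<noteq> 0" for L1 L2 s1 s2 c1 c2
      using that by (simp add: compose_TRM)
  qed (rule GN_eq subgroup_GN GN_subset_frakG GN_iso_signperm_Cstar)+
qed

end
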